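(* Let $Z$ be the tree obtained from four disjoint 3-stars $S_0,S_1,S_2,S_3$, where $S_i$ has center $u_i$ and leaves $a_i,b_i,c_i$, by identifying $c_0$ with $c_1$, $a_0$ with $c_2$, and $a_1$ with $c_3$ (so $Z$ has $13$ vertices, maximum degree $3$ and diameter $8$). Then $\gamma^{\rm ID}(Z)=8<\frac23|V(Z)|$.
   Context: An identifying code of a graph $G$ is a set $C\subseteq V(G)$ such that every vertex $v$ has $N[v]\cap C\neq\emptyset$ and for all distinct $u,v$, $N[u]\cap C \ne N[v]\cap C$, where $N[v]$ is the closed neighborhood; $\gamma^{\rm ID}(G)$ is its minimum size. *)

theory Defs
  imports Complex_Main
begin

definition closed_nbhd :: "'a set \<Rightarrow> ('a \<Rightarrow> 'a \<Rightarrow> bool) \<Rightarrow> 'a \<Rightarrow> 'a set" where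
  "closed_nbhd V E v = {w \<in> V. w = v \<or> E v w}"

definition is_identifying_code :: "'a set \<Rightarrow> ('a \<Rightarrow> 'a \<Rightarrow> bool) \<Rightarrow> 'a set \<Rightarrow> bool" where
  "is_identifying_code V E C \<longleftrightarrow>
     C \<subseteq> V \<and>
     (\<forall>v\<in>V. closed_nbhd V E v \<inter> C \<noteq> {}) \<and>
     (\<forall>u\<in>V. \<forall>v\<in>V. u \<noteq> v \<longrightarrow> closed_nbhd V E u \<inter> C \<noteq> closed_nbhd V E v \<inter> C)"

definition gamma_ID :: "'a set \<Rightarrow> ('a \<Rightarrow> 'a \<Rightarrow> bool) \<Rightarrow> nat" where
  "gamma_ID V E = Min {card C | C. is_identifying_code V E C}"

text \<open>Vertex names after identification:
  C0 stands for c_0 = c_1, A0 for a_0 = c_2, A1 for a_1 = c_3.\<close>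

datatype zv = U0 | U1 | U2 | U3 | A0 | B0 | C0 | A1 | B1 | A2 | B2 | A3 | B3

definition Z_V :: "zv set" where
  "Z_V = {U0, U1, U2, U3, A0, B0, C0, A1, B1, A2, B2, A3, B3}"

definition Z_edges :: "(zv \<times> zv) set" where
  "Z_edges = {(U0, A0), (U0, B0), (U0, C0),
              (U1, A1), (U1, B1), (U1, C0),
              (U2, A2), (U2, B2), (U2, A0),
              (U3, A3), (U3, B3), (U3, A1)}"

definition Z_E :: "zv \<Rightarrow> zv \<Rightarrow> bool" where
  "Z_E x y \<longleftrightarrow> (x, y) \<in> Z_edges \<or> (y, x) \<in> Z_edges"

end

theory Submission
  imports Defs
begin

(* Apart from C0, the tree Z consists of two disjoint branches of the same shape:
   B0 - U0 - A0 - U2 with leaves A2, B2 at U2, and B1 - U1 - A1 - U3 with leaves A3, B3 at U3.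
   The two leaves at U2 force two code vertices among U2, A2, B2, and dominating B0 forces one
   among U0, B0.  A fourth one is forced as well: if A0 is not in the code, then A2 and B2 must be
   (to be separated from U2), and if moreover U2 is not, separating A0 from B0 and dominating A0
   force both B0 and U0.  So every identifying code has at least 8 vertices, and the eight vertices
   U_i, A_i form one. *)

lemma mem_closed_nbhd_self: "v \<in> closed_nbhd V E v \<longleftrightarrow> v \<in> V"
  by (simp add: closed_nbhd_def)

lemma is_identifying_codeD:
  assumes "is_identifying_code V E C"
  shows "C \<subseteq> V"
    and "v \<in> V \<Longrightarrow> closed_nbhd V E v \<inter> C \<noteq> {}"
    and "u \<in> V \<Longrightarrow> v \<in> V \<Longrightarrow> u \<noteq> v \<Longrightarrow> closed_nbhd V E u \<inter> C \<noteq> closed_nbhd V E v \<inter> C"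
  using assms by (auto simp: is_identifying_code_def)

lemma gamma_ID_eqI:
  assumes "finite V" and "is_identifying_code V E C"
    and "\<And>D. is_identifying_code V E D \<Longrightarrow> card C \<le> card D"
  shows "gamma_ID V E = card C"
proof -
  have "{card D | D. is_identifying_code V E D} \<subseteq> {..card V}"
    using \<open>finite V\<close> by (auto dest: is_identifying_codeD(1) intro: card_mono)
  then have "finite {card D | D. is_identifying_code V E D}"
    by (rule finite_subset) simp
  then show ?thesis
    unfolding gamma_ID_def using assms(2,3) by (intro Min_eqI) auto
qed

lemma two_le_card_Int:
  assumes "finite A" "x \<in> C \<inter> A" "y \<in> C \<inter> A" "x \<noteq> y"
  shows "2 \<le> card (C \<inter> A)"
proof -
  have "card {x, y} \<le> card (C \<inter> A)"
    using assms by (intro card_mono) auto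
  with \<open>x \<noteq> y\<close> show ?thesis by simp
qed

lemma identifying_code_pendant_pair:
  assumes C: "is_identifying_code V E C"
    and a: "closed_nbhd V E a = {s, a}" and b: "closed_nbhd V E b = {s, b}"
    and dist: "distinct [s, a, b]"
  shows "2 \<le> card (C \<inter> {s, a, b})"
proof -
  have V: "a \<in> V" "b \<in> V"
    using a b mem_closed_nbhd_self by fastforce+
  have "{s, a} \<inter> C \<noteq> {s, b} \<inter> C"
    using is_identifying_codeD(3)[OF C V] a b dist by simp
  then have "a \<in> C \<or> b \<in> C"
    by auto
  moreover have "s \<in> C \<or> a \<in> C" "s \<in> C \<or> b \<in> C"
    using is_identifying_codeD(2)[OF C V(1)] is_identifying_codeD(2)[OF C V(2)] a b by auto
  ultimately consider "a \<in> C" "b \<in> C" | "s \<in> C" "a \<in> C" | "s \<in> C" "b \<in> C"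
    by blast
  then show ?thesis
  proof cases
    case 1
    with dist show ?thesis by (intro two_le_card_Int[of _ a _ b]) auto
  next
    case 2
    with dist show ?thesis by (intro two_le_card_Int[of _ s _ a]) auto
  next
    case 3
    with dist show ?thesis by (intro two_le_card_Int[of _ s _ b]) auto
  qed
qed

lemma identifying_code_branch:
  assumes C: "is_identifying_code V E C"
    and u2: "closed_nbhd V E u2 = {u2, a0, a2, b2}"
    and a2: "closed_nbhd V E a2 = {u2, a2}" and b2: "closed_nbhd V E b2 = {u2, b2}"
    and a0: "closed_nbhd V E a0 = {u0, u2, a0}" and b0: "closed_nbhd V E b0 = {u0, b0}"
    and dist: "distinct [u2, a2, b2, a0, u0, b0]"
  shows "4 \<le> card (C \<inter> {u2, a2, b2, a0, u0, b0})"
proof -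
  have V: "u2 \<in> V" "a2 \<in> V" "b2 \<in> V" "a0 \<in> V" "b0 \<in> V"
    using u2 a2 b2 a0 b0 mem_closed_nbhd_self by fastforce+
  note dom = is_identifying_codeD(2)[OF C] and sep = is_identifying_codeD(3)[OF C]
  have star: "2 \<le> card (C \<inter> {u2, a2, b2})"
    using identifying_code_pendant_pair[OF C a2 b2] dist by simp
  have b0_dom: "u0 \<in> C \<or> b0 \<in> C"
    using dom[OF V(5)] b0 by auto
  have card_split:
    "card (C \<inter> {u2, a2, b2, a0, u0, b0}) = card (C \<inter> {u2, a2, b2}) + card (C \<inter> {a0, u0, b0})"
  proof -
    have "C \<inter> {u2, a2, b2, a0, u0, b0} = (C \<inter> {u2, a2, b2}) \<union> (C \<inter> {a0, u0, b0})"
      by auto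
    moreover have "(C \<inter> {u2, a2, b2}) \<inter> (C \<inter> {a0, u0, b0}) = {}"
      using dist by auto
    ultimately show ?thesis
      by (simp add: card_Un_disjoint)
  qed
  consider "a0 \<in> C" | "a0 \<notin> C" "u2 \<in> C" | "a0 \<notin> C" "u2 \<notin> C"
    by blast
  then have "4 \<le> card (C \<inter> {u2, a2, b2}) + card (C \<inter> {a0, u0, b0})"
  proof cases
    case 1
    have "2 \<le> card (C \<inter> {a0, u0, b0})"
      using b0_dom
    proof
      assume "u0 \<in> C"
      with 1 dist show ?thesis by (intro two_le_card_Int[of _ a0 _ u0]) auto
    next
      assume "b0 \<in> C"
      with 1 dist show ?thesis by (intro two_le_card_Int[of _ a0 _ b0]) auto
    qed
    with star show ?thesis by simp
  next
    case 2
    have "b2 \<in> C"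
      using sep[OF V(1) V(2)] u2 a2 dist 2 by auto
    moreover have "a2 \<in> C"
      using sep[OF V(1) V(3)] u2 b2 dist 2 by auto
    ultimately have "C \<inter> {u2, a2, b2} = {u2, a2, b2}"
      using 2 by auto
    with dist have "card (C \<inter> {u2, a2, b2}) = 3"
      by simp
    moreover have "card (C \<inter> {a0, u0, b0}) \<noteq> 0"
      using b0_dom by auto
    ultimately show ?thesis by linarith
  next
    case 3
    have "b0 \<in> C"
      using sep[OF V(4) V(5)] a0 b0 dist 3 by auto
    moreover have "u0 \<in> C"
      using dom[OF V(4)] a0 3 by auto
    ultimately have "2 \<le> card (C \<inter> {a0, u0, b0})"
      using dist by (intro two_le_card_Int[of _ u0 _ b0]) auto
    with star show ?thesis by simp
  qed
  with card_split show ?thesis by simp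
qed

lemma Z_closed_nbhd:
  "closed_nbhd Z_V Z_E U0 = {U0, A0, B0, C0}"
  "closed_nbhd Z_V Z_E U1 = {U1, C0, A1, B1}"
  "closed_nbhd Z_V Z_E U2 = {U2, A0, A2, B2}"
  "closed_nbhd Z_V Z_E U3 = {U3, A1, A3, B3}"
  "closed_nbhd Z_V Z_E A0 = {U0, U2, A0}"
  "closed_nbhd Z_V Z_E B0 = {U0, B0}"
  "closed_nbhd Z_V Z_E C0 = {U0, U1, C0}"
  "closed_nbhd Z_V Z_E A1 = {U1, U3, A1}"
  "closed_nbhd Z_V Z_E B1 = {U1, B1}"
  "closed_nbhd Z_V Z_E A2 = {U2, A2}"
  "closed_nbhd Z_V Z_E B2 = {U2, B2}"
  "closed_nbhd Z_V Z_E A3 = {U3, A3}"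
  "closed_nbhd Z_V Z_E B3 = {U3, B3}"
  by (auto simp: closed_nbhd_def Z_V_def Z_E_def Z_edges_def)

lemma card_Z_V: "card Z_V = 13"
  by (simp add: Z_V_def)

lemma Z_identifying_code:
  "is_identifying_code Z_V Z_E {U0, U1, U2, U3, A0, A1, A2, A3}" (is "is_identifying_code _ _ ?C")
proof -
  have "closed_nbhd Z_V Z_E u \<inter> ?C = closed_nbhd Z_V Z_E v \<inter> ?C \<Longrightarrow> u = v" for u v
    by (cases u; cases v; simp add: Z_closed_nbhd set_eq_iff; blast)
  moreover have "closed_nbhd Z_V Z_E v \<inter> ?C \<noteq> {}" for v
    by (cases v) (simp_all add: Z_closed_nbhd)
  ultimately show ?thesis
    unfolding is_identifying_code_def by (auto simp: Z_V_def)
qed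

lemma card_identifying_code_Z:
  assumes C: "is_identifying_code Z_V Z_E C"
  shows "8 \<le> card C"
proof -
  have "4 \<le> card (C \<inter> {U2, A2, B2, A0, U0, B0})"
    by (rule identifying_code_branch[OF C]) (auto simp: Z_closed_nbhd)
  moreover have "4 \<le> card (C \<inter> {U3, A3, B3, A1, U1, B1})"
    by (rule identifying_code_branch[OF C]) (auto simp: Z_closed_nbhd)
  moreover have "finite C"
    using is_identifying_codeD(1)[OF C] by (rule finite_subset) (simp add: Z_V_def)
  then have "card (C \<inter> {U2, A2, B2, A0, U0, B0}) + card (C \<inter> {U3, A3, B3, A1, U1, B1}) \<le> card C"
    by (subst card_Un_disjoint[symmetric]) (auto intro: card_mono)
  ultimately show ?thesis by simp
qed

theorem mainTheorem15:
  shows "gamma_ID Z_V Z_E = 8 \<and> real (gamma_ID Z_V Z_E) < 2 / 3 * real (card Z_V)"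
proof -
  have "finite Z_V"
    by (simp add: Z_V_def)
  moreover have "card {U0, U1, U2, U3, A0, A1, A2, A3} = 8"
    by simp
  ultimately have "gamma_ID Z_V Z_E = 8"
    using gamma_ID_eqI[OF _ Z_identifying_code] card_identifying_code_Z by metis
  then show ?thesis
    by (simp add: card_Z_V)
qed

end
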